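(* Let $\delta>0$. Let $\mathcal E_{\mathrm{tab}}(\delta)$ be the event that $|\bar f(s,a)-r(s,a)|\le b(s,a)$ for all $(s,a)\in\mathcal S\times\mathcal A$, and let $\mathcal E_{\mathrm{bin}}(\delta)$ be the event that $$\frac{1}{N(s,a)\vee1}\le\frac{8\log(2|\mathcal S||\mathcal A|/\delta)}{n\,\rho(s)\,\pi^{\mathrm{ref}}(a|s)}\quad\text{for all }(s,a)\in\mathcal S\times\mathcal A.$$ Then $\mathcal E_{\mathrm{tab}}(\delta)\cap\mathcal E_{\mathrm{bin}}(\delta)$ holds with probability at least $1-\delta$.
   Context: Finite $\mathcal S,\mathcal A$; mean reward $r:\mathcal S\times\mathcal A\to[0,1]$; $\rho\in\Delta(\mathcal S)$; $\pi^{\mathrm{ref}}\in\Delta(\mathcal A|\mathcal S)$ with $\pi^{\mathrm{ref}}(a|s)>0$ for all $(s,a)$. Dataset: $n$ i.i.d. triples $(s_i,a_i,r_i)$, $s_i\sim\rho$, $a_i\sim\pi^{\mathrm{ref}}(\cdot|s_i)$, $r_i=r(s_i,a_i)+\varepsilon_i$, $\varepsilon_i$ i.i.d. mean-zero $1$-subgaussian. $N(s,a)=\sum_i\mathbf 1\{(s_i,a_i)=(s,a)\}$. If $N(s,a)=0$: $\bar f(s,a)=0$, $b(s,a)=1$; otherwise $\bar f(s,a)=\frac1{N(s,a)}\sum_ir_i\mathbf 1\{(s_i,a_i)=(s,a)\}$ and $b(s,a)=\sqrt{4\log(2|\mathcal S||\mathcal A|/\delta)/N(s,a)}$. *)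

theory Defs
  imports "HOL-Probability.Probability"
begin

definition sa_pmf :: "'s pmf \<Rightarrow> ('s \<Rightarrow> 'a pmf) \<Rightarrow> ('s \<times> 'a) pmf" where
  "sa_pmf \<rho> \<pi> = bind_pmf \<rho> (\<lambda>s. map_pmf (\<lambda>a. (s, a)) (\<pi> s))"

definition subgaussian1 :: "real measure \<Rightarrow> bool" where
  "subgaussian1 \<nu> \<longleftrightarrow> prob_space \<nu> \<and> sets \<nu> = sets borel \<and>
     integrable \<nu> (\<lambda>x. x) \<and> (\<integral>x. x \<partial>\<nu>) = 0 \<and>
     (\<forall>t::real. integrable \<nu> (\<lambda>x. exp (t * x)) \<and>
        (\<integral>x. exp (t * x) \<partial>\<nu>) \<le> exp (t\<^sup>2 / 2))"

text \<open>Dataset of n i.i.d. samples: sample i is ((s_i, a_i), eps_i), with (s_i,a_i) ~ sa_pmf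
  and noise eps_i ~ nu independent; observed reward r_i = r(s_i,a_i) + eps_i.\<close>
definition data_measure ::
  "nat \<Rightarrow> 's pmf \<Rightarrow> ('s \<Rightarrow> 'a pmf) \<Rightarrow> real measure \<Rightarrow> (nat \<Rightarrow> ('s \<times> 'a) \<times> real) measure" where
  "data_measure n \<rho> \<pi> \<nu> = PiM {..<n} (\<lambda>_. measure_pmf (sa_pmf \<rho> \<pi>) \<Otimes>\<^sub>M \<nu>)"

definition visits :: "nat \<Rightarrow> (nat \<Rightarrow> ('s \<times> 'a) \<times> real) \<Rightarrow> 's \<Rightarrow> 'a \<Rightarrow> nat set" where
  "visits n \<omega> s a = {i \<in> {..<n}. fst (\<omega> i) = (s, a)}"

definition Ncount :: "nat \<Rightarrow> (nat \<Rightarrow> ('s \<times> 'a) \<times> real) \<Rightarrow> 's \<Rightarrow> 'a \<Rightarrow> nat" where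
  "Ncount n \<omega> s a = card (visits n \<omega> s a)"

definition fbar :: "nat \<Rightarrow> ('s \<Rightarrow> 'a \<Rightarrow> real) \<Rightarrow> (nat \<Rightarrow> ('s \<times> 'a) \<times> real) \<Rightarrow> 's \<Rightarrow> 'a \<Rightarrow> real" where
  "fbar n r \<omega> s a = (if Ncount n \<omega> s a = 0 then 0
     else (\<Sum>i\<in>visits n \<omega> s a. r s a + snd (\<omega> i)) / real (Ncount n \<omega> s a))"

definition logterm :: "('s::finite) itself \<Rightarrow> ('a::finite) itself \<Rightarrow> real \<Rightarrow> real" where
  "logterm _ _ \<delta> = ln (2 * real CARD('s) * real CARD('a) / \<delta>)"

definition bonus :: "nat \<Rightarrow> real \<Rightarrow> (nat \<Rightarrow> ('s::finite \<times> 'a::finite) \<times> real) \<Rightarrow> 's \<Rightarrow> 'a \<Rightarrow> real" where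
  "bonus n \<delta> \<omega> s a = (if Ncount n \<omega> s a = 0 then 1
     else sqrt (4 * logterm TYPE('s) TYPE('a) \<delta> / real (Ncount n \<omega> s a)))"

definition E_tab :: "nat \<Rightarrow> real \<Rightarrow> ('s::finite \<Rightarrow> 'a::finite \<Rightarrow> real) \<Rightarrow> (nat \<Rightarrow> ('s \<times> 'a) \<times> real) set" where
  "E_tab n \<delta> r = {\<omega>. \<forall>s a. \<bar>fbar n r \<omega> s a - r s a\<bar> \<le> bonus n \<delta> \<omega> s a}"

text \<open>1/(N v 1) <= 8 L / (n rho(s) pi(a|s)), written multiplicatively so that the right-hand
  side is read as +infinity when n rho(s) pi(a|s) = 0.\<close>
definition E_bin :: "nat \<Rightarrow> real \<Rightarrow> ('s::finite) pmf \<Rightarrow> ('s \<Rightarrow> ('a::finite) pmf) \<Rightarrow> (nat \<Rightarrow> ('s \<times> 'a) \<times> real) set" where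
  "E_bin n \<delta> \<rho> \<pi> = {\<omega>. \<forall>s a. real n * pmf \<rho> s * pmf (\<pi> s) a
      \<le> 8 * logterm TYPE('s) TYPE('a) \<delta> * real (max (Ncount n \<omega> s a) 1)}"

end

theory Submission
  imports Defs
begin

(* A single Markov argument: bad_witness is nonnegative, at least 1 outside E_tab \<inter> E_bin,
   and has expectation at most 2 |S| |A| exp (-L) = \<delta>, where L = log (2 |S| |A| / \<delta>).
   For the empirical mean at (s, a) the set of visiting samples is random, so the exponential
   moment witness is summed over all candidate visit sets W; the term for W has expectation at
   most exp (|W| t^2 / 2) p^|W| (1 - p)^(n - |W|), and for t^2 = 4 L / |W| these binomial weights
   add up to exp (2 L).  For the count N the Chernoff witness exp (n p / (8 L) - N) works, because
   E exp (-N) = (1 - (1 - 1/e) p)^n \<le> exp (- n p / 2). *)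

lemma (in pair_sigma_finite) integral_fst_times_snd:
  fixes f :: "'a \<Rightarrow> real" and g :: "'b \<Rightarrow> real"
  assumes f: "integrable M1 f" and g: "integrable M2 g"
  shows "integrable (M1 \<Otimes>\<^sub>M M2) (\<lambda>x. f (fst x) * g (snd x))"
    and "(\<integral>x. f (fst x) * g (snd x) \<partial>(M1 \<Otimes>\<^sub>M M2)) = integral\<^sup>L M1 f * integral\<^sup>L M2 g"
proof -
  have [measurable]: "f \<in> borel_measurable M1" "g \<in> borel_measurable M2"
    using f g by auto
  show int: "integrable (M1 \<Otimes>\<^sub>M M2) (\<lambda>x. f (fst x) * g (snd x))"
    by (rule Fubini_integrable)
      (auto simp: abs_mult intro!: f g integrable_mult_left integrable_mult_right integrable_abs)
  have "(\<integral>x. f (fst x) * g (snd x) \<partial>(M1 \<Otimes>\<^sub>M M2)) = (\<integral>x. (\<integral>y. f x * g y \<partial>M2) \<partial>M1)"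
    using integral_fst'[OF int] by simp
  then show "(\<integral>x. f (fst x) * g (snd x) \<partial>(M1 \<Otimes>\<^sub>M M2)) = integral\<^sup>L M1 f * integral\<^sup>L M2 g"
    by simp
qed

lemma pmf_sa_pmf: "pmf (sa_pmf \<rho> \<pi>) (s, a) = pmf \<rho> s * pmf (\<pi> s) a"
proof -
  have "pmf (sa_pmf \<rho> \<pi>) (s, a) = (\<integral>x. indicator {s} x * pmf (\<pi> s) a \<partial>\<rho>)"
    unfolding sa_pmf_def pmf_bind
    by (intro Bochner_Integration.integral_cong refl)
      (auto simp: pmf_map inj_on_def vimage_def indicator_def measure_pmf_single)
  also have "\<dots> = pmf \<rho> s * pmf (\<pi> s) a" by (simp add: measure_pmf_single)
  finally show ?thesis .
qed

lemma (in prob_space) prob_le_integral: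
  assumes "A \<in> events" "integrable M F" "\<And>\<omega>. \<omega> \<in> space M \<Longrightarrow> 0 \<le> F \<omega>" "\<And>\<omega>. \<omega> \<in> A \<Longrightarrow> 1 \<le> F \<omega>"
  shows "prob A \<le> integral\<^sup>L M F"
proof -
  have "prob A = integral\<^sup>L M (indicator A)"
    using assms(1) by simp
  also have "\<dots> \<le> integral\<^sup>L M F"
    using assms
    by (intro integral_mono) (auto simp: indicator_def emeasure_finite less_top[symmetric])
  finally show ?thesis .
qed

lemma prob_space_sample: "prob_space \<nu> \<Longrightarrow> prob_space (measure_pmf P \<Otimes>\<^sub>M \<nu>)"
  by (intro prob_space_pair prob_space_measure_pmf)

lemma prob_space_data_measure: "subgaussian1 \<nu> \<Longrightarrow> prob_space (data_measure n \<rho> \<pi> \<nu>)"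
  unfolding data_measure_def subgaussian1_def by (intro prob_space_PiM prob_space_sample) auto

lemma measurable_data_fst [measurable]:
  assumes "i \<in> {..<n}"
  shows "(\<lambda>\<omega>. fst (\<omega> i)) \<in> measurable (data_measure n \<rho> \<pi> \<nu>) (count_space UNIV)"
  unfolding data_measure_def
  by (rule measurable_compose[OF measurable_component_singleton[of i] measurable_fst''])
    (use assms in simp_all)

lemma measurable_data_snd [measurable]:
  assumes "sets \<nu> = sets borel" and "i \<in> {..<n}"
  shows "(\<lambda>\<omega>. snd (\<omega> i)) \<in> borel_measurable (data_measure n \<rho> \<pi> \<nu>)"
  unfolding data_measure_def
  by (rule measurable_compose[OF measurable_component_singleton[of i] measurable_snd''])
    (use assms in \<open>simp_all add: measurable_cong_sets[OF refl assms(1), symmetric]\<close>)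

lemma Ncount_eq_sum: "Ncount n \<omega> s a = (\<Sum>i<n. if fst (\<omega> i) = (s, a) then 1 else 0)"
  unfolding Ncount_def visits_def by (simp add: sum.If_cases Int_def)

lemma fbar_eq_sum: "fbar n r \<omega> s a = (if Ncount n \<omega> s a = 0 then 0
    else (\<Sum>i<n. if fst (\<omega> i) = (s, a) then r s a + snd (\<omega> i) else 0) / Ncount n \<omega> s a)"
  unfolding fbar_def visits_def by (simp add: sum.If_cases Int_def)

lemma measurable_Ncount [measurable]:
  "(\<lambda>\<omega>. Ncount n \<omega> s a) \<in> measurable (data_measure n \<rho> \<pi> \<nu>) (count_space UNIV)"
proof -
  have "(\<lambda>\<omega>. Ncount n \<omega> s a) \<in> borel_measurable (data_measure n \<rho> \<pi> \<nu>)"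
    unfolding Ncount_eq_sum by measurable
  then show ?thesis
    by (simp add: measurable_cong_sets[OF refl sets_borel_eq_count_space, symmetric])
qed

lemma borel_measurable_fbar [measurable]:
  assumes "sets \<nu> = sets borel"
  shows "(\<lambda>\<omega>. fbar n r \<omega> s a) \<in> borel_measurable (data_measure n \<rho> \<pi> \<nu>)"
  unfolding fbar_eq_sum using assms by measurable

lemma borel_measurable_bonus [measurable]:
  "(\<lambda>\<omega>. bonus n \<delta> \<omega> s a) \<in> borel_measurable (data_measure n \<rho> \<pi> \<nu>)"
  unfolding bonus_def by measurable

lemma sets_E_tab_Int_E_bin:
  fixes r :: "'s::finite \<Rightarrow> 'a::finite \<Rightarrow> real"
  assumes "sets \<nu> = sets borel"
  shows "space (data_measure n \<rho> \<pi> \<nu>) \<inter> (E_tab n \<delta> r \<inter> E_bin n \<delta> \<rho> \<pi>) \<in> sets (data_measure n \<rho> \<pi> \<nu>)"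
proof -
  have [measurable]: "Measurable.pred (data_measure n \<rho> \<pi> \<nu>)
      (\<lambda>\<omega>. \<bar>fbar n r \<omega> s a - r s a\<bar> \<le> bonus n \<delta> \<omega> s a)" for s a
    unfolding pred_def using assms by (intro borel_measurable_le) measurable
  have "space (data_measure n \<rho> \<pi> \<nu>) \<inter> (E_tab n \<delta> r \<inter> E_bin n \<delta> \<rho> \<pi>)
      = {\<omega> \<in> space (data_measure n \<rho> \<pi> \<nu>). \<forall>s a. \<bar>fbar n r \<omega> s a - r s a\<bar> \<le> bonus n \<delta> \<omega> s a
          \<and> n * pmf \<rho> s * pmf (\<pi> s) a \<le> 8 * logterm TYPE('s) TYPE('a) \<delta> * real (max (Ncount n \<omega> s a) 1)}"
    by (auto simp: E_tab_def E_bin_def)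
  also have "\<dots> \<in> sets (data_measure n \<rho> \<pi> \<nu>)"
    by measurable
  finally show ?thesis .
qed

lemma
  fixes g :: "'d \<Rightarrow> real"
  assumes "prob_space \<nu>" and g: "integrable (measure_pmf P) g"
  shows integrable_sample_fst: "integrable (measure_pmf P \<Otimes>\<^sub>M \<nu>) (\<lambda>x. g (fst x))"
    and integral_sample_fst: "(\<integral>x. g (fst x) \<partial>(measure_pmf P \<Otimes>\<^sub>M \<nu>)) = integral\<^sup>L (measure_pmf P) g"
proof -
  interpret prob_space \<nu> by fact
  interpret pair_sigma_finite "measure_pmf P" \<nu> ..
  have one: "integrable \<nu> (\<lambda>_. 1 :: real)" by simp
  from integral_fst_times_snd[OF g one] show
    "integrable (measure_pmf P \<Otimes>\<^sub>M \<nu>) (\<lambda>x. g (fst x))"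
    "(\<integral>x. g (fst x) \<partial>(measure_pmf P \<Otimes>\<^sub>M \<nu>)) = integral\<^sup>L (measure_pmf P) g"
    by (simp_all add: prob_space)
qed

lemma
  assumes "subgaussian1 \<nu>"
  shows integrable_sample_tilt:
      "integrable (measure_pmf P \<Otimes>\<^sub>M \<nu>) (\<lambda>x. indicator {D} (fst x) * exp (t * snd x))"
    and integral_sample_tilt_le:
      "(\<integral>x. indicator {D} (fst x) * exp (t * snd x) \<partial>(measure_pmf P \<Otimes>\<^sub>M \<nu>)) \<le> pmf P D * exp (t\<^sup>2 / 2)"
proof -
  interpret prob_space \<nu> using assms by (simp add: subgaussian1_def)
  interpret pair_sigma_finite "measure_pmf P" \<nu> ..
  have ind: "integrable (measure_pmf P) (indicator {D} :: _ \<Rightarrow> real)"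
    by (auto intro!: integrable_real_indicator simp: less_top[symmetric])
  have mgf: "integrable \<nu> (\<lambda>x. exp (t * x))" "(\<integral>x. exp (t * x) \<partial>\<nu>) \<le> exp (t\<^sup>2 / 2)"
    using assms by (simp_all add: subgaussian1_def)
  note prod = integral_fst_times_snd[OF ind mgf(1)]
  show "integrable (measure_pmf P \<Otimes>\<^sub>M \<nu>) (\<lambda>x. indicator {D} (fst x) * exp (t * snd x))"
    by (fact prod(1))
  show "(\<integral>x. indicator {D} (fst x) * exp (t * snd x) \<partial>(measure_pmf P \<Otimes>\<^sub>M \<nu>)) \<le> pmf P D * exp (t\<^sup>2 / 2)"
    unfolding prod(2) using mgf(2) by (simp add: measure_pmf_single mult_left_mono)
qed

(* exp (t * (noise sum over W)) if the samples hitting (s, a) are exactly those in W, else 0 *)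
definition visit_tilt :: "nat \<Rightarrow> nat set \<Rightarrow> real \<Rightarrow> 's \<Rightarrow> 'a \<Rightarrow> (nat \<Rightarrow> ('s \<times> 'a) \<times> real) \<Rightarrow> real" where
  "visit_tilt n W t s a \<omega> = (\<Prod>i<n. if i \<in> W then indicator {(s, a)} (fst (\<omega> i)) * exp (t * snd (\<omega> i))
     else indicator (- {(s, a)}) (fst (\<omega> i)))"

lemma visit_tilt_nonneg: "0 \<le> visit_tilt n W t s a \<omega>"
  unfolding visit_tilt_def by (intro prod_nonneg) auto

lemma visit_tilt_visits:
  "visit_tilt n (visits n \<omega> s a) t s a \<omega> = exp (t * (\<Sum>i\<in>visits n \<omega> s a. snd (\<omega> i)))"
proof -
  have "visit_tilt n (visits n \<omega> s a) t s a \<omega>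
      = (\<Prod>i<n. if fst (\<omega> i) = (s, a) then exp (t * snd (\<omega> i)) else 1)"
    unfolding visit_tilt_def by (rule prod.cong) (auto simp: visits_def)
  also have "\<dots> = (\<Prod>i\<in>visits n \<omega> s a. exp (t * snd (\<omega> i)))"
    unfolding visits_def by (rule prod.inter_filter[symmetric]) simp
  finally show ?thesis
    by (simp add: exp_sum sum_distrib_left visits_def)
qed

lemma
  fixes P :: "('s \<times> 'a) pmf" and t :: real
  assumes sg: "subgaussian1 \<nu>" and W: "W \<subseteq> {..<n}"
  shows integrable_visit_tilt:
      "integrable (PiM {..<n} (\<lambda>_. measure_pmf P \<Otimes>\<^sub>M \<nu>)) (visit_tilt n W t s a)"
    and integral_visit_tilt_le:
      "integral\<^sup>L (PiM {..<n} (\<lambda>_. measure_pmf P \<Otimes>\<^sub>M \<nu>)) (visit_tilt n W t s a)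
        \<le> exp (real (card W) * (t\<^sup>2 / 2))
          * ((\<Prod>i\<in>W. pmf P (s, a)) * (\<Prod>i\<in>{..<n} - W. 1 - pmf P (s, a)))"
proof -
  let ?K = "measure_pmf P \<Otimes>\<^sub>M \<nu>" and ?p = "pmf P (s, a)"
  have "prob_space \<nu>" using sg by (simp add: subgaussian1_def)
  then interpret product_sigma_finite "\<lambda>_. ?K"
    by (intro product_sigma_finite.intro prob_space_imp_sigma_finite prob_space_sample)
  define f where "f i x = (if i \<in> W then indicator {(s, a)} (fst x) * exp (t * snd x)
    else indicator (- {(s, a)}) (fst x))" for i and x :: "('s \<times> 'a) \<times> real"
  have tilt: "visit_tilt n W t s a = (\<lambda>\<omega>. \<Prod>i<n. f i (\<omega> i))"
    by (simp add: visit_tilt_def f_def fun_eq_iff)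
  have ind: "integrable (measure_pmf P) (indicator (- {(s, a)}) :: _ \<Rightarrow> real)"
    by (auto intro!: integrable_real_indicator simp: less_top[symmetric])
  have f_int: "integrable ?K (f i)" for i
    using integrable_sample_tilt[OF sg] integrable_sample_fst[OF \<open>prob_space \<nu>\<close> ind]
    by (cases "i \<in> W") (simp_all add: f_def[abs_def])
  have compl: "measure_pmf.prob P (- {(s, a)}) = 1 - ?p"
    by (metis Compl_eq_Diff_UNIV UNIV_I measure_pmf.prob_compl pmf.rep_eq sets_measure_pmf
        space_measure_pmf)
  have f_le: "integral\<^sup>L ?K (f i) \<le> (if i \<in> W then ?p * exp (t\<^sup>2 / 2) else 1 - ?p)" for i
    using integral_sample_tilt_le[OF sg] integral_sample_fst[OF \<open>prob_space \<nu>\<close> ind]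
    by (cases "i \<in> W") (simp_all add: f_def[abs_def] compl)
  show "integrable (PiM {..<n} (\<lambda>_. ?K)) (visit_tilt n W t s a)"
    unfolding tilt by (intro product_integrable_prod f_int) simp
  have "integral\<^sup>L (PiM {..<n} (\<lambda>_. ?K)) (visit_tilt n W t s a) = (\<Prod>i<n. integral\<^sup>L ?K (f i))"
    unfolding tilt by (intro product_integral_prod f_int) simp
  also have "\<dots> \<le> (\<Prod>i<n. if i \<in> W then ?p * exp (t\<^sup>2 / 2) else 1 - ?p)"
    by (intro prod_mono conjI f_le integral_nonneg) (auto simp: f_def)
  also have "\<dots> = (\<Prod>i\<in>W. ?p * exp (t\<^sup>2 / 2)) * (\<Prod>i\<in>{..<n} - W. 1 - ?p)"
    using W by (simp add: prod.If_cases Int_absorb1 Diff_eq)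
  also have "\<dots> = exp (real (card W) * (t\<^sup>2 / 2)) * ((\<Prod>i\<in>W. ?p) * (\<Prod>i\<in>{..<n} - W. 1 - ?p))"
    by (simp only: prod.distrib prod_constant exp_of_nat_mult mult_ac)
  finally show "integral\<^sup>L (PiM {..<n} (\<lambda>_. ?K)) (visit_tilt n W t s a)
      \<le> exp (real (card W) * (t\<^sup>2 / 2)) * ((\<Prod>i\<in>W. ?p) * (\<Prod>i\<in>{..<n} - W. 1 - ?p))" .
qed

definition tab_witness :: "nat \<Rightarrow> real \<Rightarrow> 's \<Rightarrow> 'a \<Rightarrow> (nat \<Rightarrow> ('s \<times> 'a) \<times> real) \<Rightarrow> real" where
  "tab_witness n L s a \<omega> = (\<Sum>W\<in>Pow {..<n} - {{}}. exp (- (4 * L)) *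
     (visit_tilt n W (sqrt (4 * L / card W)) s a \<omega> + visit_tilt n W (- sqrt (4 * L / card W)) s a \<omega>))"

lemma tab_witness_nonneg: "0 \<le> tab_witness n L s a \<omega>"
  unfolding tab_witness_def
  by (intro sum_nonneg mult_nonneg_nonneg add_nonneg_nonneg visit_tilt_nonneg) auto

lemma
  fixes P :: "('s \<times> 'a) pmf"
  assumes sg: "subgaussian1 \<nu>" and L: "0 \<le> L"
  shows integrable_tab_witness:
      "integrable (PiM {..<n} (\<lambda>_. measure_pmf P \<Otimes>\<^sub>M \<nu>)) (tab_witness n L s a)"
    and integral_tab_witness_le:
      "integral\<^sup>L (PiM {..<n} (\<lambda>_. measure_pmf P \<Otimes>\<^sub>M \<nu>)) (tab_witness n L s a)
        \<le> 2 * exp (- (2 * L))"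
proof -
  let ?M = "PiM {..<n} (\<lambda>_. measure_pmf P \<Otimes>\<^sub>M \<nu>)" and ?p = "pmf P (s, a)"
  define t where "t W = sqrt (4 * L / card W)" for W :: "nat set"
  define Q where "Q W = (\<Prod>i\<in>W. ?p) * (\<Prod>i\<in>{..<n} - W. 1 - ?p)" for W :: "nat set"
  define summand where
    "summand W \<omega> = exp (- (4 * L)) * (visit_tilt n W (t W) s a \<omega> + visit_tilt n W (- t W) s a \<omega>)"
    for W \<omega>
  have witness: "tab_witness n L s a = (\<lambda>\<omega>. \<Sum>W\<in>Pow {..<n} - {{}}. summand W \<omega>)"
    by (simp add: tab_witness_def summand_def t_def fun_eq_iff)
  have summand_int: "integrable ?M (summand W)" if "W \<in> Pow {..<n}" for W
    using that unfolding summand_def by (auto intro!: integrable_visit_tilt[OF sg])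
  have summand_le: "integral\<^sup>L ?M (summand W) \<le> 2 * exp (- (2 * L)) * Q W"
    if W: "W \<in> Pow {..<n} - {{}}" for W
  proof -
    have "card W \<noteq> 0" using W finite_subset by fastforce
    have tilt_le: "integral\<^sup>L ?M (visit_tilt n W \<tau> s a) \<le> exp (2 * L) * Q W" if "\<tau>\<^sup>2 = (t W)\<^sup>2" for \<tau>
    proof -
      have "real (card W) * (\<tau>\<^sup>2 / 2) = 2 * L"
        using that L \<open>card W \<noteq> 0\<close> by (simp add: t_def)
      then show ?thesis
        using W integral_visit_tilt_le[OF sg, of W n P \<tau> s a] by (simp add: Q_def)
    qed
    have "integral\<^sup>L ?M (summand W)
        = exp (- (4 * L))
          * (integral\<^sup>L ?M (visit_tilt n W (t W) s a) + integral\<^sup>L ?M (visit_tilt n W (- t W) s a))"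
      using W unfolding summand_def by (simp add: integrable_visit_tilt[OF sg])
    also have "\<dots> \<le> exp (- (4 * L)) * (exp (2 * L) * Q W + exp (2 * L) * Q W)"
      by (intro mult_left_mono add_mono tilt_le) auto
    also have "\<dots> = 2 * (exp (- (4 * L)) * exp (2 * L)) * Q W"
      by (simp add: algebra_simps)
    finally show ?thesis
      by (simp flip: exp_add)
  qed
  have Q_sum: "(\<Sum>W\<in>Pow {..<n}. Q W) = 1"
    using prod_add[of "{..<n}" "\<lambda>_. ?p" "\<lambda>_. 1 - ?p"] by (simp add: Q_def)
  show "integrable ?M (tab_witness n L s a)"
    unfolding witness using summand_int by (intro Bochner_Integration.integrable_sum) auto
  have "integral\<^sup>L ?M (tab_witness n L s a) = (\<Sum>W\<in>Pow {..<n} - {{}}. integral\<^sup>L ?M (summand W))"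
    unfolding witness using summand_int by (intro Bochner_Integration.integral_sum) auto
  also have "\<dots> \<le> (\<Sum>W\<in>Pow {..<n} - {{}}. 2 * exp (- (2 * L)) * Q W)"
    by (intro sum_mono summand_le)
  also have "\<dots> \<le> (\<Sum>W\<in>Pow {..<n}. 2 * exp (- (2 * L)) * Q W)"
    by (intro sum_mono2) (auto simp: Q_def pmf_le_1 intro!: prod_nonneg)
  finally show "integral\<^sup>L ?M (tab_witness n L s a) \<le> 2 * exp (- (2 * L))"
    by (simp add: Q_sum flip: sum_distrib_left)
qed

lemma fbar_minus_reward:
  assumes "Ncount n \<omega> s a \<noteq> 0"
  shows "fbar n r \<omega> s a - r s a = (\<Sum>i\<in>visits n \<omega> s a. snd (\<omega> i)) / Ncount n \<omega> s a"
  using assms by (simp add: fbar_def sum.distrib Ncount_def field_simps)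

lemma tab_witness_ge_1:
  fixes r :: "'s::finite \<Rightarrow> 'a::finite \<Rightarrow> real"
  assumes L: "0 \<le> logterm TYPE('s) TYPE('a) \<delta>" and r: "\<bar>r s a\<bar> \<le> 1"
    and dev: "\<not> \<bar>fbar n r \<omega> s a - r s a\<bar> \<le> bonus n \<delta> \<omega> s a"
  shows "1 \<le> tab_witness n (logterm TYPE('s) TYPE('a) \<delta>) s a \<omega>"
proof -
  define L where "L = logterm TYPE('s) TYPE('a) \<delta>"
  define V where "V = visits n \<omega> s a"
  define S where "S = (\<Sum>i\<in>V. snd (\<omega> i))"
  define t where "t = sqrt (4 * L / card V)"
  have N: "Ncount n \<omega> s a \<noteq> 0"
    using dev r by (auto simp: fbar_def bonus_def split: if_splits)
  then have V: "V \<in> Pow {..<n} - {{}}"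
    by (auto simp: V_def visits_def Ncount_def)
  have "\<not> \<bar>S / card V\<bar> \<le> t"
    using dev N by (simp add: fbar_minus_reward bonus_def S_def V_def t_def L_def Ncount_def)
  then have "t * card V < \<bar>S\<bar>"
    using N by (simp add: V_def Ncount_def abs_divide not_le pos_less_divide_eq)
  moreover have "t * (t * card V) = 4 * L"
    using N L by (simp add: t_def L_def V_def Ncount_def flip: mult.assoc)
  moreover have "0 \<le> t"
    by (simp add: t_def L_def L)
  ultimately have "4 * L \<le> t * \<bar>S\<bar>"
    by (metis mult_left_mono less_le)
  then have "1 \<le> exp (- (4 * L)) * exp (t * \<bar>S\<bar>)"
    by (simp flip: exp_add)
  also have "\<dots> \<le> exp (- (4 * L)) * (exp (t * S) + exp (- t * S))"
    by (intro mult_left_mono) (auto simp: abs_real_def add_increasing add_increasing2)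
  also have "\<dots> = exp (- (4 * L)) * (visit_tilt n V t s a \<omega> + visit_tilt n V (- t) s a \<omega>)"
    by (simp add: V_def S_def visit_tilt_visits)
  also have "\<dots> \<le> tab_witness n L s a \<omega>"
    unfolding tab_witness_def t_def
    by (rule member_le_sum[OF V])
      (auto intro!: mult_nonneg_nonneg add_nonneg_nonneg visit_tilt_nonneg)
  finally show ?thesis by (simp add: L_def)
qed

definition bin_witness :: "nat \<Rightarrow> real \<Rightarrow> real \<Rightarrow> 's \<Rightarrow> 'a \<Rightarrow> (nat \<Rightarrow> ('s \<times> 'a) \<times> real) \<Rightarrow> real" where
  "bin_witness n L p s a \<omega> = (if 8 * L < n * p then exp (n * p / (8 * L) - Ncount n \<omega> s a) else 0)"

lemma bin_witness_nonneg: "0 \<le> bin_witness n L p s a \<omega>"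
  by (simp add: bin_witness_def)

lemma bin_witness_ge_1:
  fixes L p :: real
  assumes "0 < L" and "\<not> n * p \<le> 8 * L * real (max (Ncount n \<omega> s a) 1)"
  shows "1 \<le> bin_witness n L p s a \<omega>"
proof -
  let ?N = "real (Ncount n \<omega> s a)"
  have "8 * L \<le> 8 * L * real (max (Ncount n \<omega> s a) 1)"
    and "8 * L * ?N \<le> 8 * L * real (max (Ncount n \<omega> s a) 1)"
    using assms(1) by (simp_all add: mult_left_mono)
  then have "8 * L < n * p" "8 * L * ?N < n * p"
    using assms(2) by linarith+
  then have "8 * L < n * p" "?N < n * p / (8 * L)"
    using assms(1) by (simp_all add: pos_less_divide_eq mult.commute)
  then show ?thesis
    by (simp add: bin_witness_def)
qed

lemma exp_neg_Ncount:
  "exp (- real (Ncount n \<omega> s a)) = (\<Prod>i<n. 1 - (1 - exp (-1)) * indicator {(s, a)} (fst (\<omega> i)))"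
proof -
  have "(\<Prod>i<n. 1 - (1 - exp (-1)) * indicator {(s, a)} (fst (\<omega> i)))
      = (\<Prod>i<n. if fst (\<omega> i) = (s, a) then exp (-1) else 1 :: real)"
    by (rule prod.cong) auto
  also have "\<dots> = (\<Prod>i\<in>visits n \<omega> s a. exp (-1))"
    unfolding visits_def by (rule prod.inter_filter[symmetric]) simp
  finally show ?thesis
    by (simp add: Ncount_def exp_of_nat_mult[symmetric])
qed

lemma
  fixes P :: "('s \<times> 'a) pmf"
  assumes "prob_space \<nu>"
  shows integrable_exp_neg_Ncount:
      "integrable (PiM {..<n} (\<lambda>_. measure_pmf P \<Otimes>\<^sub>M \<nu>)) (\<lambda>\<omega>. exp (- real (Ncount n \<omega> s a)))"
    and integral_exp_neg_Ncount:
      "(\<integral>\<omega>. exp (- real (Ncount n \<omega> s a)) \<partial>PiM {..<n} (\<lambda>_. measure_pmf P \<Otimes>\<^sub>M \<nu>))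
         = (1 - (1 - exp (-1)) * pmf P (s, a)) ^ n"
proof -
  let ?K = "measure_pmf P \<Otimes>\<^sub>M \<nu>"
  interpret product_sigma_finite "\<lambda>_. ?K"
    by (intro product_sigma_finite.intro prob_space_imp_sigma_finite prob_space_sample assms)
  define g where "g = (\<lambda>x. 1 - (1 - exp (-1)) * indicator {(s, a)} x :: real)"
  have g: "integrable (measure_pmf P) g"
    "integral\<^sup>L (measure_pmf P) g = 1 - (1 - exp (-1)) * pmf P (s, a)"
    by (auto simp: g_def measure_pmf_single less_top[symmetric] intro!: integrable_real_indicator)
  note sample = integrable_sample_fst[OF assms g(1)] integral_sample_fst[OF assms g(1)]
  show "integrable (PiM {..<n} (\<lambda>_. ?K)) (\<lambda>\<omega>. exp (- real (Ncount n \<omega> s a)))"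
    unfolding exp_neg_Ncount using product_integrable_prod[of "{..<n}" "\<lambda>_ x. g (fst x)"] sample
    by (simp add: g_def)
  show "(\<integral>\<omega>. exp (- real (Ncount n \<omega> s a)) \<partial>PiM {..<n} (\<lambda>_. ?K))
      = (1 - (1 - exp (-1)) * pmf P (s, a)) ^ n"
    unfolding exp_neg_Ncount using product_integral_prod[of "{..<n}" "\<lambda>_ x. g (fst x)"] sample g(2)
    by (simp add: g_def)
qed

lemma one_minus_pow_le_exp:
  fixes p :: real
  assumes "0 \<le> p" "p \<le> 1"
  shows "(1 - (1 - exp (-1)) * p) ^ n \<le> exp (- (n * p / 2))"
proof -
  have e: "exp (-1) \<le> (1/2 :: real)"
    using exp_ge_add_one_self[of 1] by (simp add: exp_minus field_simps)
  have "0 \<le> 1 - (1 - exp (-1)) * p"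
    using assms mult_mono[of "1 - exp (-1)" 1 p 1] by simp
  then have "(1 - (1 - exp (-1)) * p) ^ n \<le> exp (- ((1 - exp (-1)) * p)) ^ n"
    by (intro power_mono) (use exp_ge_add_one_self[of "- ((1 - exp (-1)) * p)"] in linarith)
  also have "\<dots> = exp (- (n * ((1 - exp (-1)) * p)))"
    by (simp add: exp_of_nat_mult[symmetric])
  also have "\<dots> \<le> exp (- (n * p / 2))"
  proof -
    have "p / 2 \<le> (1 - exp (-1)) * p"
      using mult_right_mono[of "1/2" "1 - exp (-1)" p] assms e by simp
    then have "n * (p / 2) \<le> n * ((1 - exp (-1)) * p)"
      by (rule mult_left_mono) simp
    then show ?thesis
      by simp
  qed
  finally show ?thesis .
qed

lemma
  fixes P :: "('s \<times> 'a) pmf" and L :: real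
  assumes \<nu>: "prob_space \<nu>" and L: "1 / 2 \<le> L"
  shows integrable_bin_witness:
      "integrable (PiM {..<n} (\<lambda>_. measure_pmf P \<Otimes>\<^sub>M \<nu>)) (bin_witness n L (pmf P (s, a)) s a)"
    and integral_bin_witness_le:
      "integral\<^sup>L (PiM {..<n} (\<lambda>_. measure_pmf P \<Otimes>\<^sub>M \<nu>)) (bin_witness n L (pmf P (s, a)) s a)
        \<le> exp (- L)"
proof -
  let ?M = "PiM {..<n} (\<lambda>_. measure_pmf P \<Otimes>\<^sub>M \<nu>)" and ?p = "pmf P (s, a)"
  define x where "x = n * ?p"
  have witness: "bin_witness n L ?p s a
      = (\<lambda>\<omega>. (if 8 * L < x then exp (x / (8 * L)) else 0) * exp (- real (Ncount n \<omega> s a)))"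
    by (simp add: bin_witness_def x_def fun_eq_iff exp_diff exp_minus field_simps)
  show "integrable ?M (bin_witness n L ?p s a)"
    unfolding witness by (intro integrable_mult_right integrable_exp_neg_Ncount \<nu>)
  show "integral\<^sup>L ?M (bin_witness n L ?p s a) \<le> exp (- L)"
  proof (cases "8 * L < x")
    case False
    then show ?thesis
      by (simp add: witness)
  next
    case True
    have "integral\<^sup>L ?M (bin_witness n L ?p s a)
        = exp (x / (8 * L)) * (1 - (1 - exp (-1)) * ?p) ^ n"
      using True by (simp add: witness integral_exp_neg_Ncount[OF \<nu>])
    also have "\<dots> \<le> exp (x / (8 * L)) * exp (- (x / 2))"
      unfolding x_def by (intro mult_left_mono one_minus_pow_le_exp) (simp_all add: pmf_le_1)
    also have "\<dots> \<le> exp (- L)"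
    proof -
      have "x / (8 * L) \<le> x / 4"
        using True L by (intro divide_left_mono) auto
      then show ?thesis
        using True L by (simp flip: exp_add)
    qed
    finally show ?thesis .
  qed
qed

lemma
  fixes \<delta> :: real
  assumes "0 < \<delta>" "\<delta> \<le> 1"
  shows ln2_le_logterm: "ln 2 \<le> logterm TYPE('s::finite) TYPE('a::finite) \<delta>"
    and exp_neg_logterm: "2 * CARD('s) * CARD('a) * exp (- logterm TYPE('s) TYPE('a) \<delta>) = \<delta>"
proof -
  have "1 \<le> real CARD('s) * real CARD('a)"
    using finite_UNIV_card_ge_0[where 'a='s] finite_UNIV_card_ge_0[where 'a='a]
    by (metis One_nat_def Suc_leI nat_0_less_mult_iff of_nat_1 of_nat_le_iff of_nat_mult finite)
  then have "2 \<le> 2 * real CARD('s) * real CARD('a) / \<delta>"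
    using assms by (simp add: field_simps)
  then show "ln 2 \<le> logterm TYPE('s) TYPE('a) \<delta>"
    by (simp add: logterm_def)
  show "2 * CARD('s) * CARD('a) * exp (- logterm TYPE('s) TYPE('a) \<delta>) = \<delta>"
    using assms by (simp add: logterm_def exp_minus)
qed

definition bad_witness ::
    "nat \<Rightarrow> real \<Rightarrow> ('s::finite \<times> 'a::finite) pmf \<Rightarrow> (nat \<Rightarrow> ('s \<times> 'a) \<times> real) \<Rightarrow> real" where
  "bad_witness n L P \<omega> =
     (\<Sum>s\<in>UNIV. \<Sum>a\<in>UNIV. tab_witness n L s a \<omega> + bin_witness n L (pmf P (s, a)) s a \<omega>)"

lemma bad_witness_nonneg: "0 \<le> bad_witness n L P \<omega>"
  unfolding bad_witness_def
  by (intro sum_nonneg add_nonneg_nonneg tab_witness_nonneg bin_witness_nonneg)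

lemma
  fixes \<rho> :: "'s::finite pmf" and \<pi> :: "'s \<Rightarrow> 'a::finite pmf"
  assumes sg: "subgaussian1 \<nu>" and L: "ln 2 \<le> L"
  shows integrable_bad_witness: "integrable (data_measure n \<rho> \<pi> \<nu>) (bad_witness n L (sa_pmf \<rho> \<pi>))"
    and integral_bad_witness_le:
      "integral\<^sup>L (data_measure n \<rho> \<pi> \<nu>) (bad_witness n L (sa_pmf \<rho> \<pi>))
        \<le> 2 * CARD('s) * CARD('a) * exp (- L)"
proof -
  let ?M = "data_measure n \<rho> \<pi> \<nu>" and ?P = "sa_pmf \<rho> \<pi>"
  let ?pair = "\<lambda>s a \<omega>. tab_witness n L s a \<omega> + bin_witness n L (pmf ?P (s, a)) s a \<omega>"
  have M: "?M = PiM {..<n} (\<lambda>_. measure_pmf ?P \<Otimes>\<^sub>M \<nu>)"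
    by (simp add: data_measure_def)
  have \<nu>: "prob_space \<nu>"
    using sg by (simp add: subgaussian1_def)
  have "1 / 2 \<le> L" "0 \<le> L"
    using L ln2_ge_two_thirds by linarith+
  note tab = integrable_tab_witness[OF sg \<open>0 \<le> L\<close>] integral_tab_witness_le[OF sg \<open>0 \<le> L\<close>]
    and bin = integrable_bin_witness[OF \<nu> \<open>1 / 2 \<le> L\<close>] integral_bin_witness_le[OF \<nu> \<open>1 / 2 \<le> L\<close>]
  have "2 * exp (- L) \<le> 1"
    using L by (simp add: exp_minus field_simps exp_le_cancel_iff[of "ln 2", simplified])
  then have "2 * exp (- L) * exp (- L) \<le> 1 * exp (- L)"
    by (rule mult_right_mono) simp
  then have tab_le: "2 * exp (- (2 * L)) \<le> exp (- L)"
    by (simp add: mult.assoc flip: exp_add)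
  have pair_int: "integrable ?M (?pair s a)" for s a
    unfolding M using tab(1) bin(1) by (rule Bochner_Integration.integrable_add)
  have pair_le: "integral\<^sup>L ?M (?pair s a) \<le> 2 * exp (- L)" for s a
    using tab(1,2)[of n ?P s a] bin(1,2)[of n ?P s a] tab_le unfolding M by simp
  show "integrable ?M (bad_witness n L ?P)"
    unfolding bad_witness_def[abs_def] using pair_int by (intro Bochner_Integration.integrable_sum)
  have "integral\<^sup>L ?M (bad_witness n L ?P) = (\<Sum>s\<in>UNIV. \<Sum>a\<in>UNIV. integral\<^sup>L ?M (?pair s a))"
    unfolding bad_witness_def[abs_def]
    by (simp add: Bochner_Integration.integral_sum Bochner_Integration.integrable_sum pair_int)
  also have "\<dots> \<le> (\<Sum>s\<in>(UNIV :: 's set). \<Sum>a\<in>(UNIV :: 'a set). 2 * exp (- L))"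
    by (intro sum_mono pair_le)
  finally show "integral\<^sup>L ?M (bad_witness n L ?P) \<le> 2 * CARD('s) * CARD('a) * exp (- L)"
    by (simp add: mult_ac)
qed

lemma bad_witness_ge_1:
  fixes r :: "'s::finite \<Rightarrow> 'a::finite \<Rightarrow> real"
  assumes L: "0 < logterm TYPE('s) TYPE('a) \<delta>" and r: "\<And>s a. \<bar>r s a\<bar> \<le> 1"
    and bad: "\<omega> \<notin> E_tab n \<delta> r \<inter> E_bin n \<delta> \<rho> \<pi>"
  shows "1 \<le> bad_witness n (logterm TYPE('s) TYPE('a) \<delta>) (sa_pmf \<rho> \<pi>) \<omega>"
proof -
  let ?L = "logterm TYPE('s) TYPE('a) \<delta>"
  obtain s a where "\<not> \<bar>fbar n r \<omega> s a - r s a\<bar> \<le> bonus n \<delta> \<omega> s a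
      \<or> \<not> n * pmf (sa_pmf \<rho> \<pi>) (s, a) \<le> 8 * ?L * real (max (Ncount n \<omega> s a) 1)"
    using bad by (auto simp: E_tab_def E_bin_def pmf_sa_pmf mult.assoc)
  then have "1 \<le> tab_witness n ?L s a \<omega> + bin_witness n ?L (pmf (sa_pmf \<rho> \<pi>) (s, a)) s a \<omega>"
    using tab_witness_ge_1[OF less_imp_le[OF L] r] bin_witness_ge_1[OF L]
      tab_witness_nonneg[of n ?L s a \<omega>] bin_witness_nonneg[of n ?L "pmf (sa_pmf \<rho> \<pi>) (s, a)" s a \<omega>]
    by (meson add_increasing add_increasing2)
  also have "\<dots> \<le> (\<Sum>a'\<in>UNIV.
      tab_witness n ?L s a' \<omega> + bin_witness n ?L (pmf (sa_pmf \<rho> \<pi>) (s, a')) s a' \<omega>)"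
    by (rule member_le_sum) (auto intro: add_nonneg_nonneg tab_witness_nonneg bin_witness_nonneg)
  also have "\<dots> \<le> bad_witness n ?L (sa_pmf \<rho> \<pi>) \<omega>"
    unfolding bad_witness_def
    by (rule member_le_sum[of s])
      (auto intro!: sum_nonneg add_nonneg_nonneg tab_witness_nonneg bin_witness_nonneg)
  finally show ?thesis .
qed

theorem lemma3p1:
  fixes n :: nat and \<delta> :: real
    and r :: "'s::finite \<Rightarrow> 'a::finite \<Rightarrow> real"
    and \<rho> :: "'s pmf" and \<pi>ref :: "'s \<Rightarrow> 'a pmf" and \<nu> :: "real measure"
  assumes "\<delta> > 0"
    and "\<And>s a. 0 \<le> r s a \<and> r s a \<le> 1"
    and "\<And>s a. pmf (\<pi>ref s) a > 0"
    and "subgaussian1 \<nu>"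
  shows "measure (data_measure n \<rho> \<pi>ref \<nu>)
           (space (data_measure n \<rho> \<pi>ref \<nu>) \<inter> (E_tab n \<delta> r \<inter> E_bin n \<delta> \<rho> \<pi>ref))
         \<ge> 1 - \<delta>"
proof (cases "\<delta> \<le> 1")
  case False
  then show ?thesis
    using measure_nonneg[of "data_measure n \<rho> \<pi>ref \<nu>"] by (smt (verit))
next
  case True
  let ?M = "data_measure n \<rho> \<pi>ref \<nu>" and ?L = "logterm TYPE('s) TYPE('a) \<delta>"
  let ?G = "space ?M \<inter> (E_tab n \<delta> r \<inter> E_bin n \<delta> \<rho> \<pi>ref)"
  interpret prob_space ?M
    using assms(4) by (rule prob_space_data_measure)
  have L: "ln 2 \<le> ?L"
    using assms(1) True by (rule ln2_le_logterm)
  then have "0 < ?L"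
    using ln_gt_zero[of 2] by linarith
  have r: "\<bar>r s a\<bar> \<le> 1" for s a
    using assms(2)[of s a] by simp
  have G: "?G \<in> events"
    using assms(4) by (intro sets_E_tab_Int_E_bin) (simp add: subgaussian1_def)
  have "prob (space ?M - ?G) \<le> integral\<^sup>L ?M (bad_witness n ?L (sa_pmf \<rho> \<pi>ref))"
  proof (rule prob_le_integral)
    show "1 \<le> bad_witness n ?L (sa_pmf \<rho> \<pi>ref) \<omega>" if "\<omega> \<in> space ?M - ?G" for \<omega>
      using that by (intro bad_witness_ge_1[where r = r, OF \<open>0 < ?L\<close> r]) blast
  qed (use G assms(4) L in \<open>auto intro: integrable_bad_witness bad_witness_nonneg\<close>)
  also have "\<dots> \<le> \<delta>"
    using integral_bad_witness_le[OF assms(4) L, of n \<rho> \<pi>ref]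
      exp_neg_logterm[OF assms(1) True, where 's = 's and 'a = 'a] by simp
  finally show ?thesis
    using prob_compl[OF G] by simp
qed

end
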